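(* Let $\mathcal{M}=\langle S;\{R_i\}_{i\in I}\rangle$ be a model and $G\in\mathcal{M}$. Then there exists a set $X\subseteq\mathcal{E}^{<\omega}$ such that $G = X\to S$.
   Context: Terms $\mathcal{T}$ and $\mathcal{E}$-terms: with disjoint sets $\mathcal{X}$ ($\lambda$-variables) and $\mathcal{A}$ ($\mu$-variables), $\mathcal{T} ::= x \mid \lambda x.\mathcal{T} \mid (\mathcal{T}\ \mathcal{E}) \mid \langle \mathcal{T},\mathcal{T}\rangle \mid \omega_1\mathcal{T} \mid \omega_2\mathcal{T} \mid \mu a.\mathcal{T} \mid (a\ \mathcal{T})$ and $\mathcal{E} ::= \mathcal{T} \mid \pi_1 \mid \pi_2 \mid [x.\mathcal{T}, y.\mathcal{T}]$. Reduction $\triangleright$ is the compatible closure of: $(\lambda x.u\ v)\triangleright u[x:=v]$; $(\langle t_1,t_2\rangle\ \pi_i)\triangleright t_i$; $(\omega_i t\ [x_1.u_1,x_2.u_2])\triangleright u_i[x_i:=t]$; $((t\ [x_1.u_1,x_2.u_2])\ \varepsilon)\triangleright(t\ [x_1.(u_1\ \varepsilon),x_2.(u_2\ \varepsilon)])$; $(\mu a.t\ \varepsilon)\triangleright\mu a.t[a:=^*\varepsilon]$ ($t[a:=^*\varepsilon]$ replaces inductively each subterm $(a\ v)$ by $(a\ (v\ \varepsilon))$); $\triangleright^*$ is its reflexive-transitive closure. $\mathcal{E}^{<\omega}$ is the set of finite sequences of $\mathcal{E}$-terms, $\emptyset$ the empty one; for $\bar w=w_1\dots w_n$, $(t\ \bar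 w)$ is $t$ if $n=0$ and $((t\ w_1)\ w_2\dots w_n)$ otherwise. For a set $X$ of such sequences and a set of terms $S$, $X\to S=\{t \mid (t\ \bar w)\in S \text{ for all } \bar w\in X\}$. A set of terms $S$ is $\mu$-saturated if (i) $u\in S$ and $v\triangleright^* u$ imply $v\in S$, and (ii) $t\in S$, $a\in\mathcal{A}$ imply $\mu a.t\in S$ and $(a\ t)\in S$. For sets of terms $K,L$ and a fixed $\mu$-saturated $S$: $K\to L=\{t\mid (t\ u)\in L\ \forall u\in K\}$; $K\wedge L=\{t\mid (t\ \pi_1)\in K,\ (t\ \pi_2)\in L\}$; $K\vee L=\{t\mid$ for all $x,y,u,v$: if $u[x:=r]\in S$ and $v[y:=s]\in S$ for all $r\in K,s\in L$, then $(t\ [x.u,y.v])\in S\}$. A model $\mathcal{M}=\langle S;\{R_i\}_{i\in I}\rangle$, where $S$ is $\mu$-saturated and each $R_i=X_i\to S$ for some $X_i\subseteq\mathcal{E}^{<\omega}$, is the smallest set of sets of terms containing $S$ and all $R_i$ and closed under $\to,\wedge,\vee$ (as defined relative to $S$). *)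

theory Defs
  imports Main
begin

text \<open>Terms of the lambda-mu calculus with pairs and sums, in de Bruijn notation
  (terms are thus taken modulo alpha-conversion). lambda-variables (bound by Lam and by
  the two branches of Case) and mu-variables (bound by Mu) live in two separate index
  spaces, so the two variable sets are disjoint. Free variables are dangling indices.\<close>

datatype trm =
    Var nat
  | Lam trm
  | App trm elm
  | Pair trm trm
  | Inj1 trm
  | Inj2 trm
  | Mu trm
  | MApp nat trm
and elm =
    ET trm
  | Pi1
  | Pi2
  | Case trm trm       \<comment> \<open>[x.u, y.v]; each branch binds lambda-index 0\<close>

primrec lift_x :: "nat \<Rightarrow> trm \<Rightarrow> trm" and lift_xe :: "nat \<Rightarrow> elm \<Rightarrow> elm" where
  "lift_x k (Var n) = Var (if n < k then n else Suc n)"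
| "lift_x k (Lam t) = Lam (lift_x (Suc k) t)"
| "lift_x k (App t e) = App (lift_x k t) (lift_xe k e)"
| "lift_x k (Pair t1 t2) = Pair (lift_x k t1) (lift_x k t2)"
| "lift_x k (Inj1 t) = Inj1 (lift_x k t)"
| "lift_x k (Inj2 t) = Inj2 (lift_x k t)"
| "lift_x k (Mu t) = Mu (lift_x k t)"
| "lift_x k (MApp a t) = MApp a (lift_x k t)"
| "lift_xe k (ET t) = ET (lift_x k t)"
| "lift_xe k Pi1 = Pi1"
| "lift_xe k Pi2 = Pi2"
| "lift_xe k (Case u v) = Case (lift_x (Suc k) u) (lift_x (Suc k) v)"

primrec lift_a :: "nat \<Rightarrow> trm \<Rightarrow> trm" and lift_ae :: "nat \<Rightarrow> elm \<Rightarrow> elm" where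
  "lift_a k (Var n) = Var n"
| "lift_a k (Lam t) = Lam (lift_a k t)"
| "lift_a k (App t e) = App (lift_a k t) (lift_ae k e)"
| "lift_a k (Pair t1 t2) = Pair (lift_a k t1) (lift_a k t2)"
| "lift_a k (Inj1 t) = Inj1 (lift_a k t)"
| "lift_a k (Inj2 t) = Inj2 (lift_a k t)"
| "lift_a k (Mu t) = Mu (lift_a (Suc k) t)"
| "lift_a k (MApp a t) = MApp (if a < k then a else Suc a) (lift_a k t)"
| "lift_ae k (ET t) = ET (lift_a k t)"
| "lift_ae k Pi1 = Pi1"
| "lift_ae k Pi2 = Pi2"
| "lift_ae k (Case u v) = Case (lift_a k u) (lift_a k v)"

text \<open>subst k s t : t[x_k := s] (capture-avoiding, removing the binder of index k)\<close>
primrec subst :: "nat \<Rightarrow> trm \<Rightarrow> trm \<Rightarrow> trm" and subste :: "nat \<Rightarrow> trm \<Rightarrow> elm \<Rightarrow> elm" where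
  "subst k s (Var n) = (if n < k then Var n else if n = k then s else Var (n - 1))"
| "subst k s (Lam t) = Lam (subst (Suc k) (lift_x 0 s) t)"
| "subst k s (App t e) = App (subst k s t) (subste k s e)"
| "subst k s (Pair t1 t2) = Pair (subst k s t1) (subst k s t2)"
| "subst k s (Inj1 t) = Inj1 (subst k s t)"
| "subst k s (Inj2 t) = Inj2 (subst k s t)"
| "subst k s (Mu t) = Mu (subst k (lift_a 0 s) t)"
| "subst k s (MApp a t) = MApp a (subst k s t)"
| "subste k s (ET t) = ET (subst k s t)"
| "subste k s Pi1 = Pi1"
| "subste k s Pi2 = Pi2"
| "subste k s (Case u v) = Case (subst (Suc k) (lift_x 0 s) u) (subst (Suc k) (lift_x 0 s) v)"

primrec msubst :: "nat \<Rightarrow> elm \<Rightarrow> trm \<Rightarrow> trm" and msubste :: "nat \<Rightarrow> elm \<Rightarrow> elm \<Rightarrow> elm" where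
  "msubst k e (Var n) = Var n"
| "msubst k e (Lam t) = Lam (msubst k (lift_xe 0 e) t)"
| "msubst k e (App t f) = App (msubst k e t) (msubste k e f)"
| "msubst k e (Pair t1 t2) = Pair (msubst k e t1) (msubst k e t2)"
| "msubst k e (Inj1 t) = Inj1 (msubst k e t)"
| "msubst k e (Inj2 t) = Inj2 (msubst k e t)"
| "msubst k e (Mu t) = Mu (msubst (Suc k) (lift_ae 0 e) t)"
| "msubst k e (MApp a t) = (if a = k then MApp a (App (msubst k e t) e) else MApp a (msubst k e t))"
| "msubste k e (ET t) = ET (msubst k e t)"
| "msubste k e Pi1 = Pi1"
| "msubste k e Pi2 = Pi2"
| "msubste k e (Case u v) = Case (msubst k (lift_xe 0 e) u) (msubst k (lift_xe 0 e) v)"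

inductive red :: "trm \<Rightarrow> trm \<Rightarrow> bool" and rede :: "elm \<Rightarrow> elm \<Rightarrow> bool" where
  beta: "red (App (Lam u) (ET v)) (subst 0 v u)"
| proj1: "red (App (Pair t1 t2) Pi1) t1"
| proj2: "red (App (Pair t1 t2) Pi2) t2"
| case1: "red (App (Inj1 t) (Case u1 u2)) (subst 0 t u1)"
| case2: "red (App (Inj2 t) (Case u1 u2)) (subst 0 t u2)"
| comm: "red (App (App t (Case u1 u2)) e)
             (App t (Case (App u1 (lift_xe 0 e)) (App u2 (lift_xe 0 e))))"
| mu: "red (App (Mu t) e) (Mu (msubst 0 (lift_ae 0 e) t))"
| c_lam: "red t t' \<Longrightarrow> red (Lam t) (Lam t')"
| c_app1: "red t t' \<Longrightarrow> red (App t e) (App t' e)"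
| c_app2: "rede e e' \<Longrightarrow> red (App t e) (App t e')"
| c_pair1: "red t t' \<Longrightarrow> red (Pair t u) (Pair t' u)"
| c_pair2: "red u u' \<Longrightarrow> red (Pair t u) (Pair t u')"
| c_inj1: "red t t' \<Longrightarrow> red (Inj1 t) (Inj1 t')"
| c_inj2: "red t t' \<Longrightarrow> red (Inj2 t) (Inj2 t')"
| c_mu: "red t t' \<Longrightarrow> red (Mu t) (Mu t')"
| c_mapp: "red t t' \<Longrightarrow> red (MApp a t) (MApp a t')"
| ce_t: "red t t' \<Longrightarrow> rede (ET t) (ET t')"
| ce_case1: "red u u' \<Longrightarrow> rede (Case u v) (Case u' v)"
| ce_case2: "red v v' \<Longrightarrow> rede (Case u v) (Case u v')"

abbreviation reds :: "trm \<Rightarrow> trm \<Rightarrow> bool" where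
  "reds \<equiv> red\<^sup>*\<^sup>*"

definition appl :: "trm \<Rightarrow> elm list \<Rightarrow> trm" where
  "appl t ws = foldl App t ws"

definition seq_arrow :: "elm list set \<Rightarrow> trm set \<Rightarrow> trm set" where
  "seq_arrow X S = {t. \<forall>ws\<in>X. appl t ws \<in> S}"

definition mu_saturated :: "trm set \<Rightarrow> bool" where
  "mu_saturated S \<longleftrightarrow>
     (\<forall>u v. u \<in> S \<and> reds v u \<longrightarrow> v \<in> S) \<and>
     (\<forall>t a. t \<in> S \<longrightarrow> Mu t \<in> S \<and> MApp a t \<in> S)"

definition imp_set :: "trm set \<Rightarrow> trm set \<Rightarrow> trm set" where
  "imp_set K L = {t. \<forall>u\<in>K. App t (ET u) \<in> L}"

definition conj_set :: "trm set \<Rightarrow> trm set \<Rightarrow> trm set" where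
  "conj_set K L = {t. App t Pi1 \<in> K \<and> App t Pi2 \<in> L}"

text \<open>K \<or> L relative to S; the branch variables x, y are de Bruijn index 0 of u, v.\<close>
definition disj_set :: "trm set \<Rightarrow> trm set \<Rightarrow> trm set \<Rightarrow> trm set" where
  "disj_set S K L = {t. \<forall>u v. (\<forall>r\<in>K. subst 0 r u \<in> S) \<and> (\<forall>s\<in>L. subst 0 s v \<in> S)
                         \<longrightarrow> App t (Case u v) \<in> S}"

inductive_set model :: "trm set \<Rightarrow> 'i set \<Rightarrow> ('i \<Rightarrow> trm set) \<Rightarrow> trm set set"
  for S :: "trm set" and I :: "'i set" and R :: "'i \<Rightarrow> trm set" where
  base: "S \<in> model S I R"
| gen: "i \<in> I \<Longrightarrow> R i \<in> model S I R"
| imp: "K \<in> model S I R \<Longrightarrow> L \<in> model S I R \<Longrightarrow> imp_set K L \<in> model S I R"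
| conj: "K \<in> model S I R \<Longrightarrow> L \<in> model S I R \<Longrightarrow> conj_set K L \<in> model S I R"
| disj: "K \<in> model S I R \<Longrightarrow> L \<in> model S I R \<Longrightarrow> disj_set S K L \<in> model S I R"

end

theory Submission
  imports Defs
begin

(* The sets of the form  X \<rightarrow> S  (X a set of finite sequences of E-terms) contain S
   itself (take X = {empty sequence}) and are closed under the three type constructors:
   - a union of sequence sets gives the intersection of the arrow sets;
   - prefixing every sequence of Y by a fixed E-term e yields exactly the terms t with
     (t e) \<in> Y \<rightarrow> S;
   hence K \<rightarrow> (Y \<rightarrow> S) is given by the sequences  u :: Y  (u \<in> K), and
   (X \<rightarrow> S) \<and> (Y \<rightarrow> S) by the sequences  \<pi>1 :: X  and  \<pi>2 :: Y;
   finally K \<or> L is by definition  X \<rightarrow> S  for the one-element sequences [x.u, y.v]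
   whose branches u, v send K, resp. L, into S.
   None of this depends on the structure of K or L, beyond L in the implication case.
   The theorem follows by induction on the generation of the model; the generators R_i
   are of this form by hypothesis. *)

lemma appl_Nil [simp]: "appl t [] = t"
  by (simp add: appl_def)

lemma appl_Cons [simp]: "appl t (e # ws) = appl (App t e) ws"
  by (simp add: appl_def)

lemma seq_arrow_empty_seq: "seq_arrow {[]} S = S"
  by (simp add: seq_arrow_def)

lemma seq_arrow_UN: "seq_arrow (\<Union>i\<in>A. X i) S = {t. \<forall>i\<in>A. t \<in> seq_arrow (X i) S}"
  by (auto simp: seq_arrow_def)

lemma seq_arrow_Un: "seq_arrow (X \<union> Y) S = seq_arrow X S \<inter> seq_arrow Y S"
  by (auto simp: seq_arrow_def)

lemma seq_arrow_Cons: "seq_arrow ((#) e ` Y) S = {t. App t e \<in> seq_arrow Y S}"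
  by (simp add: seq_arrow_def)

lemma imp_set_seq_arrow:
  "imp_set K (seq_arrow Y S) = seq_arrow (\<Union>u\<in>K. (#) (ET u) ` Y) S"
  by (simp add: imp_set_def seq_arrow_UN seq_arrow_Cons)

lemma conj_set_seq_arrow:
  "conj_set (seq_arrow X S) (seq_arrow Y S) = seq_arrow ((#) Pi1 ` X \<union> (#) Pi2 ` Y) S"
  by (auto simp: conj_set_def seq_arrow_Un seq_arrow_Cons)

lemma disj_set_seq_arrow:
  "disj_set S K L =
     seq_arrow ((\<lambda>(u, v). [Case u v]) `
       {(u, v). (\<forall>r\<in>K. subst 0 r u \<in> S) \<and> (\<forall>s\<in>L. subst 0 s v \<in> S)}) S"
  by (auto simp: disj_set_def seq_arrow_def)

theorem mainTheorem2:
  fixes S :: "trm set" and I :: "'i set" and R :: "'i \<Rightarrow> trm set" and G :: "trm set"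
  assumes "mu_saturated S"
    and "\<forall>i\<in>I. \<exists>X. R i = seq_arrow X S"
    and "G \<in> model S I R"
  shows "\<exists>X. G = seq_arrow X S"
  using assms(3)
proof (induction rule: model.induct)
  case base
  have "S = seq_arrow {[]} S" by (simp only: seq_arrow_empty_seq)
  then show ?case ..
next
  case (gen i)
  then show ?case using assms(2) by blast
next
  case (imp K L)
  then obtain Y where "L = seq_arrow Y S" by blast
  then show ?case using imp_set_seq_arrow by blast
next
  case (conj K L)
  then obtain X Y where "K = seq_arrow X S" and "L = seq_arrow Y S" by blast
  then show ?case using conj_set_seq_arrow by blast
next
  case (disj K L)
  show ?case using disj_set_seq_arrow by blast
qed

end
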